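(* For every normal-form term $E$ (in $\eta$-long form) and every ground type $t$: $\cdot\vdash E : t$ (declarative typing in the empty environment) holds if and only if $\cdot\vdash E\Leftarrow t$ (concrete algorithmic checking in the empty environment) holds.
   Context: Fix a set of type constructors, each with a fixed arity, and an infinite set of type variables. Base types are $B ::= \tau \mid C\,B_1\ldots B_k$; ground base types $b$ contain no type variables. Types are $T ::= B\mid B\to T$; ground types $t ::= b \mid b\to t$. A polytype is $\forall\tau_1\ldots\tau_n.T$. A component library $\Lambda$ is a finite map from component names $c$ to polytypes; the arity of $c$ is the number of arrows in $\Lambda(c)$. Substitutions $\sigma$ map type variables to base types (identity elsewhere). A bottom type $\bot$ is added; $\mathbf{B}_\bot$ = base types $\cup\{\bot\}$. $T'\sqsubseteq T$ iff $T'=\sigma T$ for some $\sigma$; $\bot\sqsubseteq B$ for all $B$; $\equiv$ is mutual $\sqsubseteq$. The bottom substitution $\sigma_\bot$ sends every type to $\bot$, and every substitution maps $\bot$ to $\bot$. $\mathrm{mgu}$ denotes the most general (simultaneous) unifier of a sequence of pairs of types, which is $\sigma_\bot$ if no proper unifier exists and the identity for the empty sequence. $\mathrm{fresh}(\forall\bar\tau.T)$ renames $\bar\tau$ to fresh variables. Type transformer: if $\mathrm{fresh}(\Lambda(c))=B'_1\to\cdots\to B'_m\to B'$ then $[\![c]\!](B_1,\ldots,B_m)=\sigma B'$ with $\sigma=\mathrm{mgu}(B_1,B'_1;\ldots;B_m,B'_m)$. Terms (in $\eta$-long form): application terms $e ::= x \mid c(e_1,\ldots,e_m)$ with $m$ the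 arity of $c$; normal-form terms $E ::= e\mid \lambda x.E$. A typing environment $\Gamma$ maps variables to ground base types. Declarative typing $\Gamma\vdash E:t$ ($t$ ground): (Var) if $\Gamma(x)=b$ then $\Gamma\vdash x:b$; (App) if $\Lambda(c)=\forall\bar\tau.T$, $\sigma T=b_1\to\cdots\to b_m\to b$ is ground and $\Gamma\vdash e_i:b_i$ for all $i$, then $\Gamma\vdash c(e_1,\ldots,e_m):b$; (Fun) if $\Gamma,x{:}b\vdash E:t$ then $\Gamma\vdash\lambda x.E : b\to t$. Concrete algorithmic inference $\Gamma\vdash e\Rightarrow B$: if $\Gamma(x)=b$ then $\Gamma\vdash x\Rightarrow b$; if $\Gamma\vdash e_i\Rightarrow B_i$ for all $i$ then $\Gamma\vdash c(e_1,\ldots,e_m)\Rightarrow [\![c]\!](B_1,\ldots,B_m)$. Concrete algorithmic checking $\Gamma\vdash E\Leftarrow t$: if $\Gamma,x{:}b\vdash E\Leftarrow t$ then $\Gamma\vdash\lambda x.E\Leftarrow b\to t$; if $\Gamma\vdash e\Rightarrow B$ and $b\sqsubseteq B$ then $\Gamma\vdash e\Leftarrow b$. *)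

theory Defs
  imports Main
begin

datatype ('c, 'v) btype = TVar 'v | TCon 'c "('c, 'v) btype list"

datatype ('c, 'v) ty = TB "('c, 'v) btype" | Arr "('c, 'v) btype" "('c, 'v) ty"

datatype 'a botext = BBot | BTy 'a

fun wf_b :: "('c \<Rightarrow> nat) \<Rightarrow> ('c, 'v) btype \<Rightarrow> bool" where
  "wf_b ar (TVar v) = True"
| "wf_b ar (TCon c Bs) = (length Bs = ar c \<and> (\<forall>B\<in>set Bs. wf_b ar B))"

fun wf_t :: "('c \<Rightarrow> nat) \<Rightarrow> ('c, 'v) ty \<Rightarrow> bool" where
  "wf_t ar (TB B) = wf_b ar B"
| "wf_t ar (Arr B T) = (wf_b ar B \<and> wf_t ar T)"

fun tvars_b :: "('c, 'v) btype \<Rightarrow> 'v set" where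
  "tvars_b (TVar v) = {v}"
| "tvars_b (TCon c Bs) = (\<Union>B\<in>set Bs. tvars_b B)"

fun tvars_t :: "('c, 'v) ty \<Rightarrow> 'v set" where
  "tvars_t (TB B) = tvars_b B"
| "tvars_t (Arr B T) = tvars_b B \<union> tvars_t T"

fun tvars_bot :: "('c, 'v) btype botext \<Rightarrow> 'v set" where
  "tvars_bot BBot = {}"
| "tvars_bot (BTy B) = tvars_b B"

definition ground_b :: "('c, 'v) btype \<Rightarrow> bool" where
  "ground_b B \<longleftrightarrow> tvars_b B = {}"

definition ground_t :: "('c, 'v) ty \<Rightarrow> bool" where
  "ground_t T \<longleftrightarrow> tvars_t T = {}"

fun args_of :: "('c, 'v) ty \<Rightarrow> ('c, 'v) btype list" where
  "args_of (TB B) = []"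
| "args_of (Arr B T) = B # args_of T"

fun res_of :: "('c, 'v) ty \<Rightarrow> ('c, 'v) btype" where
  "res_of (TB B) = B"
| "res_of (Arr B T) = res_of T"

fun subst_b :: "('v \<Rightarrow> ('c, 'v) btype) \<Rightarrow> ('c, 'v) btype \<Rightarrow> ('c, 'v) btype" where
  "subst_b \<sigma> (TVar v) = \<sigma> v"
| "subst_b \<sigma> (TCon c Bs) = TCon c (map (subst_b \<sigma>) Bs)"

fun subst_t :: "('v \<Rightarrow> ('c, 'v) btype) \<Rightarrow> ('c, 'v) ty \<Rightarrow> ('c, 'v) ty" where
  "subst_t \<sigma> (TB B) = TB (subst_b \<sigma> B)"
| "subst_t \<sigma> (Arr B T) = Arr (subst_b \<sigma> B) (subst_t \<sigma> T)"

fun subst_bot :: "('v \<Rightarrow> ('c, 'v) btype) \<Rightarrow> ('c, 'v) btype botext \<Rightarrow> ('c, 'v) btype botext" where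
  "subst_bot \<sigma> BBot = BBot"
| "subst_bot \<sigma> (BTy B) = BTy (subst_b \<sigma> B)"

definition wf_subst :: "('c \<Rightarrow> nat) \<Rightarrow> ('v \<Rightarrow> ('c, 'v) btype) \<Rightarrow> bool" where
  "wf_subst ar \<sigma> \<longleftrightarrow> (\<forall>v. wf_b ar (\<sigma> v))"

definition inst_le :: "('c \<Rightarrow> nat) \<Rightarrow> ('c, 'v) btype botext \<Rightarrow> ('c, 'v) btype botext \<Rightarrow> bool" where
  "inst_le ar X' X \<longleftrightarrow> X' = BBot \<or> (\<exists>\<sigma>. wf_subst ar \<sigma> \<and> X' = subst_bot \<sigma> X)"

definition unifier :: "('c \<Rightarrow> nat) \<Rightarrow> ('v \<Rightarrow> ('c, 'v) btype)
    \<Rightarrow> (('c, 'v) btype botext \<times> ('c, 'v) btype botext) list \<Rightarrow> bool" where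
  "unifier ar \<sigma> ps \<longleftrightarrow> wf_subst ar \<sigma> \<and> (\<forall>(X, Y)\<in>set ps. subst_bot \<sigma> X = subst_bot \<sigma> Y)"

definition is_mgu :: "('c \<Rightarrow> nat) \<Rightarrow> ('v \<Rightarrow> ('c, 'v) btype)
    \<Rightarrow> (('c, 'v) btype botext \<times> ('c, 'v) btype botext) list \<Rightarrow> bool" where
  "is_mgu ar \<sigma> ps \<longleftrightarrow> unifier ar \<sigma> ps \<and>
     (\<forall>\<theta>. unifier ar \<theta> ps \<longrightarrow> (\<exists>\<delta>. wf_subst ar \<delta> \<and> (\<forall>v. \<theta> v = subst_b \<delta> (\<sigma> v))))"

text \<open>transformer ar T Bs R: R is a possible value of [[c]](Bs) when Lambda(c) = forall tvs. T
  (polytypes are closed, so all type variables of T are bound).  fresh renames the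
  bound variables injectively to variables not occurring in the arguments; then
  R = mgu(Bs, B's) B', where mgu is the bottom substitution (giving bottom) if there is
  no proper unifier.  Freshness and the choice of mgu are only determined up to
  renaming; the relation allows any such choice.\<close>
definition transformer :: "('c \<Rightarrow> nat) \<Rightarrow> ('c, 'v) ty \<Rightarrow> ('c, 'v) btype botext list
    \<Rightarrow> ('c, 'v) btype botext \<Rightarrow> bool" where
  "transformer ar T Bs R \<longleftrightarrow>
     (\<exists>\<rho> :: 'v \<Rightarrow> 'v.
        inj_on \<rho> (tvars_t T) \<and> \<rho> ` tvars_t T \<inter> (\<Union>X\<in>set Bs. tvars_bot X) = {} \<and>
        (let T' = subst_t (TVar \<circ> \<rho>) T;
             ps = zip Bs (map BTy (args_of T'))
         in length Bs = length (args_of T') \<and>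
            (if (\<exists>\<sigma>. unifier ar \<sigma> ps)
             then (\<exists>\<sigma>. is_mgu ar \<sigma> ps \<and> R = BTy (subst_b \<sigma> (res_of T')))
             else R = BBot)))"

datatype ('n, 'x) aterm = Var 'x | App 'n "('n, 'x) aterm list"
datatype ('n, 'x) nterm = Atm "('n, 'x) aterm" | Lam 'x "('n, 'x) nterm"

type_synonym ('n, 'c, 'v) library = "'n \<Rightarrow> ('c, 'v) ty option"
type_synonym ('x, 'c, 'v) env = "'x \<Rightarrow> ('c, 'v) btype option"

inductive decl_a :: "('c \<Rightarrow> nat) \<Rightarrow> ('n, 'c, 'v) library \<Rightarrow> ('x, 'c, 'v) env
    \<Rightarrow> ('n, 'x) aterm \<Rightarrow> ('c, 'v) btype \<Rightarrow> bool"
  for ar \<Lambda> where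
  decl_var: "\<Gamma> x = Some b \<Longrightarrow> decl_a ar \<Lambda> \<Gamma> (Var x) b"
| decl_app: "\<Lambda> c = Some T \<Longrightarrow> wf_subst ar \<sigma> \<Longrightarrow> ground_t (subst_t \<sigma> T) \<Longrightarrow>
    subst_t \<sigma> T = T0 \<Longrightarrow> list_all2 (decl_a ar \<Lambda> \<Gamma>) es (args_of T0) \<Longrightarrow>
    decl_a ar \<Lambda> \<Gamma> (App c es) (res_of T0)"

inductive decl_n :: "('c \<Rightarrow> nat) \<Rightarrow> ('n, 'c, 'v) library \<Rightarrow> ('x, 'c, 'v) env
    \<Rightarrow> ('n, 'x) nterm \<Rightarrow> ('c, 'v) ty \<Rightarrow> bool"
  for ar \<Lambda> where
  decl_atm: "decl_a ar \<Lambda> \<Gamma> e b \<Longrightarrow> decl_n ar \<Lambda> \<Gamma> (Atm e) (TB b)"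
| decl_fun: "ground_b b \<Longrightarrow> decl_n ar \<Lambda> (\<Gamma>(x \<mapsto> b)) E t \<Longrightarrow> decl_n ar \<Lambda> \<Gamma> (Lam x E) (Arr b t)"

inductive infer :: "('c \<Rightarrow> nat) \<Rightarrow> ('n, 'c, 'v) library \<Rightarrow> ('x, 'c, 'v) env
    \<Rightarrow> ('n, 'x) aterm \<Rightarrow> ('c, 'v) btype botext \<Rightarrow> bool"
  for ar \<Lambda> where
  infer_var: "\<Gamma> x = Some b \<Longrightarrow> infer ar \<Lambda> \<Gamma> (Var x) (BTy b)"
| infer_app: "\<Lambda> c = Some T \<Longrightarrow> list_all2 (infer ar \<Lambda> \<Gamma>) es Bs \<Longrightarrow>
    transformer ar T Bs R \<Longrightarrow> infer ar \<Lambda> \<Gamma> (App c es) R"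

inductive check :: "('c \<Rightarrow> nat) \<Rightarrow> ('n, 'c, 'v) library \<Rightarrow> ('x, 'c, 'v) env
    \<Rightarrow> ('n, 'x) nterm \<Rightarrow> ('c, 'v) ty \<Rightarrow> bool"
  for ar \<Lambda> where
  check_fun: "ground_b b \<Longrightarrow> check ar \<Lambda> (\<Gamma>(x \<mapsto> b)) E t \<Longrightarrow> check ar \<Lambda> \<Gamma> (Lam x E) (Arr b t)"
| check_atm: "ground_b b \<Longrightarrow> infer ar \<Lambda> \<Gamma> e B \<Longrightarrow> inst_le ar (BTy b) B \<Longrightarrow>
    check ar \<Lambda> \<Gamma> (Atm e) (TB b)"

end

theory Submission
  imports Defs
begin

text \<open>Both directions are proved for application terms and then lifted along the
  \<lambda>-abstractions, with an environment of ground types as invariant.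

  Completeness: a declarative type of an application term is an instance of an inferred type.
  The inferred types of the arguments can be taken with pairwise disjoint variables, so one
  substitution instantiates all of them to the declared argument types. Together with the
  instance of the component's polytype used by rule App, applied to a freshly renamed copy, it
  unifies the arguments with the parameters; hence a most general unifier exists, and the
  declared result type is an instance of the transformer's result.

  Soundness: every ground instance of an inferred type is a declarative type. For an
  application, the unifier chosen by the transformer followed by a grounding substitution gives
  the instance of the polytype, and the ground instances of the argument types required by
  rule App.

  Most general unifiers are obtained by Robinson's elimination, by well-founded induction on the
  number of variables and then the size of the unification problem.\<close>

section \<open>Substitutions\<close>

lemma subst_b_subst_b: "subst_b \<theta> (subst_b \<sigma> B) = subst_b (\<lambda>u. subst_b \<theta> (\<sigma> u)) B"
  by (induction B) auto

lemma subst_t_subst_t: "subst_t \<theta> (subst_t \<sigma> T) = subst_t (\<lambda>u. subst_b \<theta> (\<sigma> u)) T"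
  by (induction T) (auto simp: subst_b_subst_b)

lemma subst_b_cong: "(\<And>u. u \<in> tvars_b B \<Longrightarrow> \<theta> u = \<theta>' u) \<Longrightarrow> subst_b \<theta> B = subst_b \<theta>' B"
  by (induction B) auto

lemma subst_t_cong: "(\<And>u. u \<in> tvars_t T \<Longrightarrow> \<theta> u = \<theta>' u) \<Longrightarrow> subst_t \<theta> T = subst_t \<theta>' T"
  by (induction T) (auto intro: subst_b_cong)

lemma subst_b_TVar [simp]: "subst_b TVar B = B"
  by (induction B) (auto simp: map_idI)

lemma subst_b_idI: "(\<And>u. u \<in> tvars_b B \<Longrightarrow> \<theta> u = TVar u) \<Longrightarrow> subst_b \<theta> B = B"
  using subst_b_cong[of B \<theta> TVar] by simp

lemma subst_b_ground: "ground_b B \<Longrightarrow> subst_b \<theta> B = B"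
  by (rule subst_b_idI) (simp add: ground_b_def)

lemma tvars_b_subst_b: "tvars_b (subst_b \<sigma> B) = (\<Union>u\<in>tvars_b B. tvars_b (\<sigma> u))"
  by (induction B) auto

lemma tvars_t_subst_t: "tvars_t (subst_t \<sigma> T) = (\<Union>u\<in>tvars_t T. tvars_b (\<sigma> u))"
  by (induction T) (auto simp: tvars_b_subst_b)

lemma finite_tvars_b [simp]: "finite (tvars_b B)"
  by (induction B) auto

lemma finite_tvars_t [simp]: "finite (tvars_t T)"
  by (induction T) auto

lemma args_of_subst_t [simp]: "args_of (subst_t \<sigma> T) = map (subst_b \<sigma>) (args_of T)"
  by (induction T) auto

lemma res_of_subst_t [simp]: "res_of (subst_t \<sigma> T) = subst_b \<sigma> (res_of T)"
  by (induction T) auto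

lemma tvars_t_args_res: "tvars_t T = (\<Union>B\<in>set (args_of T). tvars_b B) \<union> tvars_b (res_of T)"
  by (induction T) auto

lemma ground_b_subst_b: "(\<And>u. ground_b (\<theta> u)) \<Longrightarrow> ground_b (subst_b \<theta> B)"
  by (simp add: ground_b_def tvars_b_subst_b)

lemma ground_t_subst_t: "(\<And>u. ground_b (\<theta> u)) \<Longrightarrow> ground_t (subst_t \<theta> T)"
  by (simp add: ground_b_def ground_t_def tvars_t_subst_t)

lemma wf_subst_TVar [simp]: "wf_subst ar TVar"
  by (simp add: wf_subst_def)

lemma wf_b_subst_b: "wf_subst ar \<sigma> \<Longrightarrow> wf_b ar B \<Longrightarrow> wf_b ar (subst_b \<sigma> B)"
  by (induction B) (auto simp: wf_subst_def)

lemma wf_t_subst_t: "wf_subst ar \<sigma> \<Longrightarrow> wf_t ar T \<Longrightarrow> wf_t ar (subst_t \<sigma> T)"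
  by (induction T) (auto simp: wf_b_subst_b)

lemma wf_b_subst_bD: "wf_b ar (subst_b \<sigma> B) \<Longrightarrow> wf_b ar B"
  by (induction B) auto

lemma wf_b_res_of: "wf_t ar T \<Longrightarrow> wf_b ar (res_of T)"
  by (induction T) auto

definition ground_completion :: "('c, 'v) btype \<Rightarrow> ('v \<Rightarrow> ('c, 'v) btype) \<Rightarrow> 'v \<Rightarrow> ('c, 'v) btype" where
  "ground_completion b \<sigma> u = subst_b (\<lambda>_. b) (\<sigma> u)"

lemma ground_completion_ground: "ground_b b \<Longrightarrow> ground_b (ground_completion b \<sigma> u)"
  unfolding ground_completion_def by (rule ground_b_subst_b)

lemma wf_subst_ground_completion:
  "wf_b ar b \<Longrightarrow> wf_subst ar \<sigma> \<Longrightarrow> wf_subst ar (ground_completion b \<sigma>)"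
  by (auto simp: wf_subst_def ground_completion_def intro: wf_b_subst_b)

lemma subst_b_ground_completion:
  "subst_b (ground_completion b \<sigma>) X = subst_b (\<lambda>_. b) (subst_b \<sigma> X)"
  by (simp add: ground_completion_def[abs_def] subst_b_subst_b)

section \<open>Unification\<close>

definition unifies :: "('v \<Rightarrow> ('c, 'v) btype) \<Rightarrow> (('c, 'v) btype \<times> ('c, 'v) btype) list \<Rightarrow> bool" where
  "unifies \<theta> ps \<longleftrightarrow> (\<forall>(X, Y)\<in>set ps. subst_b \<theta> X = subst_b \<theta> Y)"

definition pairs_tvars :: "(('c, 'v) btype \<times> ('c, 'v) btype) list \<Rightarrow> 'v set" where
  "pairs_tvars ps = (\<Union>(X, Y)\<in>set ps. tvars_b X \<union> tvars_b Y)"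

definition pairs_size :: "(('c, 'v) btype \<times> ('c, 'v) btype) list \<Rightarrow> nat" where
  "pairs_size ps = (\<Sum>(X, Y)\<leftarrow>ps. size X + size Y)"

text \<open>Stronger than is_mgu: \<theta> itself witnesses that a unifier \<theta> is an instance of \<sigma>, and
  the variable bound is what keeps inferred types fresh.\<close>
definition mgu_within :: "('v \<Rightarrow> ('c, 'v) btype) \<Rightarrow> (('c, 'v) btype \<times> ('c, 'v) btype) list \<Rightarrow> bool" where
  "mgu_within \<sigma> ps \<longleftrightarrow> unifies \<sigma> ps \<and> (\<forall>\<theta>. unifies \<theta> ps \<longrightarrow> (\<forall>u. subst_b \<theta> (\<sigma> u) = \<theta> u))
     \<and> (\<forall>u. tvars_b (\<sigma> u) \<subseteq> pairs_tvars ps \<union> {u})"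

lemma unifies_Nil [simp]: "unifies \<theta> []"
  by (simp add: unifies_def)

lemma unifies_Cons [simp]: "unifies \<theta> ((X, Y) # ps) \<longleftrightarrow> subst_b \<theta> X = subst_b \<theta> Y \<and> unifies \<theta> ps"
  by (simp add: unifies_def)

lemma unifies_append [simp]: "unifies \<theta> (ps @ qs) \<longleftrightarrow> unifies \<theta> ps \<and> unifies \<theta> qs"
  by (auto simp: unifies_def)

lemma unifies_zip:
  "length As = length Bs \<Longrightarrow> unifies \<theta> (zip As Bs) \<longleftrightarrow> map (subst_b \<theta>) As = map (subst_b \<theta>) Bs"
  by (induction As Bs rule: list_induct2) auto

lemma pairs_tvars_Nil [simp]: "pairs_tvars [] = {}"
  by (simp add: pairs_tvars_def)

lemma pairs_tvars_Cons [simp]: "pairs_tvars ((X, Y) # ps) = tvars_b X \<union> tvars_b Y \<union> pairs_tvars ps"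
  by (auto simp: pairs_tvars_def)

lemma pairs_tvars_append [simp]: "pairs_tvars (ps @ qs) = pairs_tvars ps \<union> pairs_tvars qs"
  by (auto simp: pairs_tvars_def)

lemma pairs_tvars_zip: "length As = length Bs \<Longrightarrow>
   pairs_tvars (zip As Bs) = (\<Union>A\<in>set As. tvars_b A) \<union> (\<Union>B\<in>set Bs. tvars_b B)"
  by (induction As Bs rule: list_induct2) auto

lemma finite_pairs_tvars [simp]: "finite (pairs_tvars ps)"
  by (auto simp: pairs_tvars_def)

lemma pairs_size_Nil [simp]: "pairs_size [] = 0"
  by (simp add: pairs_size_def)

lemma pairs_size_Cons [simp]: "pairs_size ((X, Y) # ps) = size X + size Y + pairs_size ps"
  by (simp add: pairs_size_def)

lemma pairs_size_append [simp]: "pairs_size (ps @ qs) = pairs_size ps + pairs_size qs"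
  by (simp add: pairs_size_def)

lemma pairs_size_zip_le: "length As = length Bs \<Longrightarrow>
   pairs_size (zip As Bs) \<le> size_list size As + size_list size Bs"
  by (induction As Bs rule: list_induct2) auto

lemma size_subst_b_tvar: "v \<in> tvars_b Y \<Longrightarrow> size (\<theta> v) \<le> size (subst_b \<theta> Y)"
proof (induction Y)
  case (TCon c Ys)
  then obtain Y where "Y \<in> set Ys" "size (\<theta> v) \<le> size (subst_b \<theta> Y)" by auto
  then show ?case
    using size_list_estimation'[of Y Ys "size (\<theta> v)" "size \<circ> subst_b \<theta>"] by simp
qed simp

lemma subst_b_occurs: "v \<in> tvars_b Y \<Longrightarrow> Y \<noteq> TVar v \<Longrightarrow> subst_b \<theta> Y \<noteq> \<theta> v"
proof (cases Y)
  case (TCon c Ys)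
  assume "v \<in> tvars_b Y"
  then obtain Z where "Z \<in> set Ys" "size (\<theta> v) \<le> size (subst_b \<theta> Z)"
    using TCon size_subst_b_tvar by fastforce
  then have "size (\<theta> v) < size (subst_b \<theta> Y)"
    using TCon size_list_estimation'[of Z Ys "size (\<theta> v)" "size \<circ> subst_b \<theta>"] by simp
  then show ?thesis by auto
qed simp

definition subst_pairs :: "('v \<Rightarrow> ('c, 'v) btype) \<Rightarrow> (('c, 'v) btype \<times> ('c, 'v) btype) list
    \<Rightarrow> (('c, 'v) btype \<times> ('c, 'v) btype) list" where
  "subst_pairs \<sigma> ps = map (\<lambda>(X, Y). (subst_b \<sigma> X, subst_b \<sigma> Y)) ps"

lemma unifies_subst_pairs: "unifies \<theta> (subst_pairs \<sigma> ps) \<longleftrightarrow> unifies (\<lambda>u. subst_b \<theta> (\<sigma> u)) ps"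
  by (auto simp: unifies_def subst_pairs_def subst_b_subst_b)

lemma pairs_tvars_subst_pairs: "pairs_tvars (subst_pairs \<sigma> ps) = (\<Union>u\<in>pairs_tvars ps. tvars_b (\<sigma> u))"
  by (induction ps) (auto simp: pairs_tvars_def subst_pairs_def tvars_b_subst_b)

lemma subst_b_eliminate_var: "\<theta> v = subst_b \<theta> Y \<Longrightarrow> (\<lambda>u. subst_b \<theta> ((TVar(v := Y)) u)) = \<theta>"
  by auto

lemma mgu_within_transfer:
  assumes "mgu_within \<sigma> qs"
    and "\<And>\<theta>. unifies \<theta> qs \<longleftrightarrow> unifies \<theta> ps" and "pairs_tvars qs \<subseteq> pairs_tvars ps"
  shows "mgu_within \<sigma> ps"
  using assms unfolding mgu_within_def by blast

lemma mgu_within_eliminate: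
  assumes v: "v \<notin> tvars_b Y" and mgu: "mgu_within \<sigma> (subst_pairs (TVar(v := Y)) ps)"
  shows "mgu_within (\<lambda>u. subst_b \<sigma> ((TVar(v := Y)) u)) ((TVar v, Y) # ps)"
proof -
  let ?\<tau> = "TVar(v := Y)"
  have "subst_b ?\<tau> Y = Y"
    using v by (intro subst_b_idI) auto
  then have "subst_b (\<lambda>u. subst_b \<sigma> (?\<tau> u)) Y = subst_b \<sigma> Y"
    by (metis subst_b_subst_b)
  moreover have "unifies (\<lambda>u. subst_b \<sigma> (?\<tau> u)) ps"
    using mgu by (simp add: mgu_within_def unifies_subst_pairs)
  ultimately have "unifies (\<lambda>u. subst_b \<sigma> (?\<tau> u)) ((TVar v, Y) # ps)"
    by simp
  moreover have "subst_b \<theta> (subst_b \<sigma> (?\<tau> u)) = \<theta> u"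
    if "unifies \<theta> ((TVar v, Y) # ps)" for \<theta> u
  proof -
    have \<theta>: "(\<lambda>u. subst_b \<theta> (?\<tau> u)) = \<theta>"
      using that by (intro subst_b_eliminate_var) simp
    then have "unifies \<theta> (subst_pairs ?\<tau> ps)"
      using that by (simp add: unifies_subst_pairs)
    then have "subst_b \<theta> (subst_b \<sigma> (?\<tau> u)) = subst_b \<theta> (?\<tau> u)"
      using mgu by (simp add: mgu_within_def subst_b_subst_b)
    with \<theta> show ?thesis by metis
  qed
  moreover have "tvars_b (subst_b \<sigma> (?\<tau> u)) \<subseteq> pairs_tvars ((TVar v, Y) # ps) \<union> {u}" for u
  proof -
    have "pairs_tvars (subst_pairs ?\<tau> ps) \<subseteq> pairs_tvars ((TVar v, Y) # ps)"
      by (auto simp: pairs_tvars_subst_pairs split: if_splits)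
    then show ?thesis
      using mgu by (fastforce simp: mgu_within_def tvars_b_subst_b split: if_splits)
  qed
  ultimately show ?thesis
    unfolding mgu_within_def by blast
qed

definition unif_order :: "((('c, 'v) btype \<times> ('c, 'v) btype) list \<times> (('c, 'v) btype \<times> ('c, 'v) btype) list) set"
  where "unif_order = measures [\<lambda>ps. card (pairs_tvars ps), pairs_size]"

lemma wf_unif_order: "wf unif_order"
  by (simp add: unif_order_def)

lemma unif_order_smaller_size:
  "pairs_tvars qs \<subseteq> pairs_tvars ps \<Longrightarrow> pairs_size qs < pairs_size ps \<Longrightarrow> (qs, ps) \<in> unif_order"
  using card_mono[OF finite_pairs_tvars] by (fastforce simp: unif_order_def)

lemma mgu_within_step_var:
  assumes "\<theta> v = subst_b \<theta> Z" and "Z \<noteq> TVar v" and "unifies \<theta> rest"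
  shows "(subst_pairs (TVar(v := Z)) rest, (TVar v, Z) # rest) \<in> unif_order"
    and "unifies \<theta> (subst_pairs (TVar(v := Z)) rest)"
    and "mgu_within \<sigma> (subst_pairs (TVar(v := Z)) rest)
      \<Longrightarrow> mgu_within (\<lambda>u. subst_b \<sigma> ((TVar(v := Z)) u)) ((TVar v, Z) # rest)"
proof -
  have v: "v \<notin> tvars_b Z"
    using subst_b_occurs[of v Z \<theta>] assms(1,2) by auto
  then have "pairs_tvars (subst_pairs (TVar(v := Z)) rest) \<subseteq> pairs_tvars ((TVar v, Z) # rest) - {v}"
    by (auto simp: pairs_tvars_subst_pairs split: if_splits)
  then have "card (pairs_tvars (subst_pairs (TVar(v := Z)) rest)) < card (pairs_tvars ((TVar v, Z) # rest))"
    by (intro psubset_card_mono) auto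
  then show "(subst_pairs (TVar(v := Z)) rest, (TVar v, Z) # rest) \<in> unif_order"
    by (simp add: unif_order_def)
  show "unifies \<theta> (subst_pairs (TVar(v := Z)) rest)"
    unfolding unifies_subst_pairs subst_b_eliminate_var[OF assms(1)] by (rule assms(3))
  show "mgu_within \<sigma> (subst_pairs (TVar(v := Z)) rest)
      \<Longrightarrow> mgu_within (\<lambda>u. subst_b \<sigma> ((TVar(v := Z)) u)) ((TVar v, Z) # rest)"
    by (rule mgu_within_eliminate[OF v])
qed

lemma mgu_within_step_decompose:
  assumes "unifies \<theta> ((TCon c As, TCon d Bs) # rest)" (is "unifies \<theta> ?ps")
  shows "(zip As Bs @ rest, ?ps) \<in> unif_order" and "unifies \<theta> (zip As Bs @ rest)"
    and "mgu_within \<sigma> (zip As Bs @ rest) \<Longrightarrow> mgu_within \<sigma> ?ps"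
proof -
  let ?qs = "zip As Bs @ rest"
  have "c = d" and "map (subst_b \<theta>) As = map (subst_b \<theta>) Bs"
    using assms by auto
  then have len: "length As = length Bs"
    by (metis length_map)
  have unif: "unifies \<theta>' ?qs \<longleftrightarrow> unifies \<theta>' ?ps" for \<theta>'
    using len \<open>c = d\<close> by (simp add: unifies_zip)
  have vars: "pairs_tvars ?qs = pairs_tvars ?ps"
    using len by (auto simp: pairs_tvars_zip)
  have "pairs_size ?qs < pairs_size ?ps"
    using pairs_size_zip_le[OF len] by simp
  then show "(?qs, ?ps) \<in> unif_order"
    using vars by (intro unif_order_smaller_size) auto
  show "unifies \<theta> ?qs"
    using assms unif by blast
  show "mgu_within \<sigma> ?qs \<Longrightarrow> mgu_within \<sigma> ?ps"
    by (erule mgu_within_transfer) (use unif vars in auto)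
qed

lemma mgu_within_exists: "unifies \<theta> ps \<Longrightarrow> \<exists>\<sigma>. mgu_within \<sigma> ps"
proof (induction ps arbitrary: \<theta> rule: wf_induct_rule[OF wf_unif_order])
  case (1 ps)
  show ?case
  proof (cases ps)
    case Nil
    then have "mgu_within TVar ps"
      by (simp add: mgu_within_def)
    then show ?thesis by blast
  next
    case (Cons p rest)
    then obtain X Y where ps: "ps = (X, Y) # rest"
      by (cases p) auto
    consider (trivial) "X = Y"
      | (var) v Z where "{X, Y} = {TVar v, Z}" "Z \<noteq> TVar v"
      | (decompose) c As d Bs where "X = TCon c As" "Y = TCon d Bs"
      by (cases X; cases Y) auto
    then show ?thesis
    proof cases
      case trivial
      have "0 < size X"
        by (cases X) auto
      then have "(rest, ps) \<in> unif_order"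
        using ps by (intro unif_order_smaller_size) auto
      then obtain \<sigma> where "mgu_within \<sigma> rest"
        using "1.IH" "1.prems" ps by auto
      then have "mgu_within \<sigma> ps"
        by (rule mgu_within_transfer) (auto simp: ps trivial)
      then show ?thesis by blast
    next
      case var
      have oriented: "unifies \<theta>' ((TVar v, Z) # rest) \<longleftrightarrow> unifies \<theta>' ps"
        "pairs_tvars ((TVar v, Z) # rest) = pairs_tvars ps"
        "pairs_size ((TVar v, Z) # rest) = pairs_size ps" for \<theta>'
        using var(1) by (auto simp: ps doubleton_eq_iff)
      have \<theta>v: "\<theta> v = subst_b \<theta> Z" and rest: "unifies \<theta> rest"
        using oriented(1)[of \<theta>] "1.prems" by simp_all
      note step = mgu_within_step_var[OF \<theta>v var(2) rest]
      have "(subst_pairs (TVar(v := Z)) rest, ps) \<in> unif_order"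
        using step(1) oriented(2,3) by (simp add: unif_order_def)
      then obtain \<sigma> where "mgu_within \<sigma> (subst_pairs (TVar(v := Z)) rest)"
        using "1.IH" step(2) by blast
      then have "mgu_within (\<lambda>u. subst_b \<sigma> ((TVar(v := Z)) u)) ps"
        by (rule mgu_within_transfer[OF step(3)]) (use oriented in auto)
      then show ?thesis by blast
    next
      case decompose
      then have "unifies \<theta> ((TCon c As, TCon d Bs) # rest)"
        using "1.prems" ps by simp
      note step = mgu_within_step_decompose[OF this]
      obtain \<sigma> where "mgu_within \<sigma> (zip As Bs @ rest)"
        using "1.IH" step(1,2) ps decompose by blast
      then show ?thesis
        using step(3) ps decompose by blast
    qed
  qed
qed

section \<open>Fresh renaming and the type transformer\<close>

lemma fresh_renaming:
  assumes "infinite (UNIV :: 'v set)" and "finite A" and "finite F"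
  obtains \<rho> :: "'v \<Rightarrow> 'v" where "inj_on \<rho> A" and "\<rho> ` A \<inter> F = {}"
proof -
  obtain B where B: "finite B" "card B = card A" "B \<subseteq> UNIV - F"
    using infinite_arbitrarily_large Diff_infinite_finite assms by metis
  then obtain \<rho> where "inj_on \<rho> A" "\<rho> ` A \<subseteq> B"
    using inj_on_iff_card_le[OF \<open>finite A\<close> \<open>finite B\<close>] by auto
  with B(3) that show thesis by blast
qed

lemma renamed_instance:
  assumes "inj_on \<rho> (tvars_t T)" and "wf_subst ar \<sigma>" and "wf_subst ar \<theta>"
  obtains \<theta>' where "subst_t \<theta>' (subst_t (TVar \<circ> \<rho>) T) = subst_t \<sigma> T" and "wf_subst ar \<theta>'"
    and "\<And>u. u \<notin> \<rho> ` tvars_t T \<Longrightarrow> \<theta>' u = \<theta> u"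
proof
  let ?\<theta>' = "\<lambda>u. if u \<in> \<rho> ` tvars_t T then \<sigma> (inv_into (tvars_t T) \<rho> u) else \<theta> u"
  show "subst_t ?\<theta>' (subst_t (TVar \<circ> \<rho>) T) = subst_t \<sigma> T"
    unfolding subst_t_subst_t by (rule subst_t_cong) (simp add: inv_into_f_f[OF assms(1)])
  show "wf_subst ar ?\<theta>'"
    using assms(2,3) by (simp add: wf_subst_def)
qed simp

lemma unifier_zip_BTy: "length Xs = length Ys \<Longrightarrow>
  unifier ar \<sigma> (zip (map BTy Xs) (map BTy Ys)) \<longleftrightarrow> wf_subst ar \<sigma> \<and> unifies \<sigma> (zip Xs Ys)"
  by (induction Xs Ys rule: list_induct2) (auto simp: unifier_def)

lemma is_mgu_if_mgu_within:
  assumes "length Xs = length Ys" and "mgu_within \<sigma> (zip Xs Ys)"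
    and "unifier ar \<theta> (zip (map BTy Xs) (map BTy Ys))"
  shows "is_mgu ar \<sigma> (zip (map BTy Xs) (map BTy Ys))"
proof -
  have \<theta>: "wf_subst ar \<theta>" "unifies \<theta> (zip Xs Ys)"
    using assms(1,3) by (simp_all add: unifier_zip_BTy)
  then have "subst_b \<theta> (\<sigma> u) = \<theta> u" for u
    using assms(2) by (simp add: mgu_within_def)
  then have "wf_subst ar \<sigma>"
    using \<theta>(1) wf_b_subst_bD by (metis wf_subst_def)
  then show ?thesis
    using assms by (auto simp: is_mgu_def unifier_zip_BTy mgu_within_def)
qed

lemma tvars_subst_mgu_within:
  "mgu_within \<sigma> ps \<Longrightarrow> tvars_b (subst_b \<sigma> X) \<subseteq> pairs_tvars ps \<union> tvars_b X"
  by (fastforce simp: mgu_within_def tvars_b_subst_b)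

lemma transformer_BTy_intro:
  assumes "inj_on \<rho> (tvars_t T)" and "\<rho> ` tvars_t T \<inter> (\<Union>B\<in>set Bs. tvars_b B) = {}"
    and len: "length Bs = length (args_of (subst_t (TVar \<circ> \<rho>) T))"
    and mgu: "mgu_within \<sigma> (zip Bs (args_of (subst_t (TVar \<circ> \<rho>) T)))"
    and "unifies \<theta> (zip Bs (args_of (subst_t (TVar \<circ> \<rho>) T)))" and "wf_subst ar \<theta>"
  shows "transformer ar T (map BTy Bs) (BTy (subst_b \<sigma> (res_of (subst_t (TVar \<circ> \<rho>) T))))"
proof -
  let ?ps = "zip (map BTy Bs) (map BTy (args_of (subst_t (TVar \<circ> \<rho>) T)))"
  have "unifier ar \<theta> ?ps"
    unfolding unifier_zip_BTy[OF len] using assms(5,6) by simp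
  moreover have "is_mgu ar \<sigma> ?ps"
    by (rule is_mgu_if_mgu_within[OF len mgu \<open>unifier ar \<theta> ?ps\<close>])
  ultimately show ?thesis
    unfolding transformer_def Let_def using assms(1,2) len by (intro exI[of _ \<rho>]) auto
qed

lemma transformer_complete:
  assumes inf: "infinite (UNIV :: 'v set)"
    and wf: "wf_subst ar \<sigma>" "wf_subst ar \<theta>"
    and args: "args_of (subst_t \<sigma> T) = map (subst_b \<theta>) Bs"
    and F: "finite F" "(\<Union>B\<in>set Bs. tvars_b B) \<inter> F = {}"
  obtains B :: "('c, 'v) btype" and \<theta>' where "transformer ar T (map BTy Bs) (BTy B)"
    and "tvars_b B \<inter> F = {}" and "wf_subst ar \<theta>'" and "res_of (subst_t \<sigma> T) = subst_b \<theta>' B"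
proof -
  let ?V = "F \<union> (\<Union>B\<in>set Bs. tvars_b B)"
  obtain \<rho> :: "'v \<Rightarrow> 'v" where \<rho>: "inj_on \<rho> (tvars_t T)" "\<rho> ` tvars_t T \<inter> ?V = {}"
    using fresh_renaming[OF inf finite_tvars_t, of ?V] F(1) by auto
  define T' where "T' = subst_t (TVar \<circ> \<rho>) T"
  obtain \<theta>' where T': "subst_t \<theta>' T' = subst_t \<sigma> T" and wf': "wf_subst ar \<theta>'"
    and \<theta>'\<theta>: "\<And>u. u \<notin> \<rho> ` tvars_t T \<Longrightarrow> \<theta>' u = \<theta> u"
    using renamed_instance[OF \<rho>(1) wf] unfolding T'_def by blast
  have "map (subst_b \<theta>') Bs = map (subst_b \<theta>) Bs"
    using \<rho>(2) by (intro map_cong refl subst_b_cong \<theta>'\<theta>) blast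
  then have args': "map (subst_b \<theta>') Bs = map (subst_b \<theta>') (args_of T')"
    using args T' by (metis args_of_subst_t)
  then have len: "length Bs = length (args_of T')"
    by (metis length_map)
  have "unifies \<theta>' (zip Bs (args_of T'))"
    using args' len by (simp add: unifies_zip)
  then obtain \<sigma>' where mgu: "mgu_within \<sigma>' (zip Bs (args_of T'))"
    using mgu_within_exists by blast
  have "\<rho> ` tvars_t T \<inter> (\<Union>B\<in>set Bs. tvars_b B) = {}"
    using \<rho>(2) by blast
  then have "transformer ar T (map BTy Bs) (BTy (subst_b \<sigma>' (res_of T')))"
    using len mgu \<open>unifies \<theta>' _\<close> unfolding T'_def by (rule transformer_BTy_intro[OF \<rho>(1) _ _ _ _ wf'])
  moreover have "tvars_b (subst_b \<sigma>' (res_of T')) \<inter> F = {}"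
  proof -
    have "tvars_t T' = \<rho> ` tvars_t T"
      by (auto simp: T'_def tvars_t_subst_t)
    moreover have "tvars_b (subst_b \<sigma>' (res_of T')) \<subseteq> (\<Union>B\<in>set Bs. tvars_b B) \<union> tvars_t T'"
      using tvars_subst_mgu_within[OF mgu] tvars_t_args_res[of T'] len by (auto simp: pairs_tvars_zip)
    ultimately show ?thesis
      using F(2) \<rho>(2) by blast
  qed
  moreover have "res_of (subst_t \<sigma> T) = subst_b \<theta>' (subst_b \<sigma>' (res_of T'))"
    using mgu \<open>unifies \<theta>' _\<close> T'[symmetric] by (simp add: mgu_within_def subst_b_subst_b)
  ultimately show thesis
    using that wf' by blast
qed

section \<open>Completeness of checking\<close>

definition ground_env :: "('x, 'c, 'v) env \<Rightarrow> bool" where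
  "ground_env \<Gamma> \<longleftrightarrow> (\<forall>x b. \<Gamma> x = Some b \<longrightarrow> ground_b b)"

lemma ground_env_empty: "ground_env Map.empty"
  by (simp add: ground_env_def)

lemma ground_env_upd: "ground_env \<Gamma> \<Longrightarrow> ground_b b \<Longrightarrow> ground_env (\<Gamma>(x \<mapsto> b))"
  by (simp add: ground_env_def)

text \<open>Freshness of the inferred type lets the inferred types of the arguments of an application
  be instantiated independently of each other.\<close>
definition inferable_instance :: "('c \<Rightarrow> nat) \<Rightarrow> ('n, 'c, 'v) library \<Rightarrow> ('x, 'c, 'v) env
    \<Rightarrow> ('n, 'x) aterm \<Rightarrow> ('c, 'v) btype \<Rightarrow> bool" where
  "inferable_instance ar \<Lambda> \<Gamma> e b \<longleftrightarrow> (\<forall>F. finite F \<longrightarrow>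
     (\<exists>B \<theta>. infer ar \<Lambda> \<Gamma> e (BTy B) \<and> tvars_b B \<inter> F = {} \<and> wf_subst ar \<theta> \<and> b = subst_b \<theta> B))"

lemma inferable_instances:
  assumes "list_all2 (inferable_instance ar \<Lambda> \<Gamma>) es bs" and "finite F"
  shows "\<exists>Bs \<theta>. list_all2 (infer ar \<Lambda> \<Gamma>) es (map BTy Bs) \<and> (\<Union>B\<in>set Bs. tvars_b B) \<inter> F = {}
    \<and> wf_subst ar \<theta> \<and> bs = map (subst_b \<theta>) Bs"
  using assms
proof (induction arbitrary: F rule: list_all2_induct)
  case Nil
  show ?case
    by (intro exI[of _ "[]"] exI[of _ TVar]) simp
next
  case (Cons e es b bs)
  obtain B \<theta>\<^sub>1 where B: "infer ar \<Lambda> \<Gamma> e (BTy B)" "tvars_b B \<inter> F = {}" "wf_subst ar \<theta>\<^sub>1"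
    "b = subst_b \<theta>\<^sub>1 B"
    using Cons.hyps(1) Cons.prems unfolding inferable_instance_def by blast
  obtain Bs \<theta> where Bs: "list_all2 (infer ar \<Lambda> \<Gamma>) es (map BTy Bs)"
    "(\<Union>B\<in>set Bs. tvars_b B) \<inter> (F \<union> tvars_b B) = {}" "wf_subst ar \<theta>" "bs = map (subst_b \<theta>) Bs"
    using Cons.IH[of "F \<union> tvars_b B"] Cons.prems by auto
  define \<theta>' where "\<theta>' u = (if u \<in> tvars_b B then \<theta>\<^sub>1 u else \<theta> u)" for u
  have "subst_b \<theta>' B = subst_b \<theta>\<^sub>1 B"
    by (rule subst_b_cong) (simp add: \<theta>'_def)
  moreover have "map (subst_b \<theta>') Bs = map (subst_b \<theta>) Bs"
    using Bs(2) by (intro map_cong refl subst_b_cong) (auto simp: \<theta>'_def)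
  moreover have "wf_subst ar \<theta>'"
    using B(3) Bs(3) by (simp add: wf_subst_def \<theta>'_def)
  ultimately show ?case
    using B Bs by (intro exI[of _ "B # Bs"] exI[of _ \<theta>']) auto
qed

lemma decl_a_inferable_instance:
  assumes inf: "infinite (UNIV :: 'v set)"
  shows "decl_a ar \<Lambda> \<Gamma> e b \<Longrightarrow> ground_env \<Gamma> \<Longrightarrow> inferable_instance ar \<Lambda> (\<Gamma> :: ('x, 'c, 'v) env) e b"
proof (induction rule: decl_a.induct)
  case (decl_var \<Gamma> x b)
  then have "infer ar \<Lambda> \<Gamma> (Var x) (BTy b)" and "tvars_b b = {}"
    by (auto intro: infer_var simp: ground_env_def ground_b_def)
  then show ?case
    unfolding inferable_instance_def by (intro allI impI exI[of _ b] exI[of _ TVar]) auto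
next
  case (decl_app c T \<sigma> T\<^sub>0 \<Gamma> es)
  show ?case
    unfolding inferable_instance_def
  proof (intro allI impI)
    fix F :: "'v set"
    assume "finite F"
    have "list_all2 (inferable_instance ar \<Lambda> \<Gamma>) es (args_of T\<^sub>0)"
      using decl_app.IH decl_app.prems by (simp add: list_all2_conv_all_nth)
    then obtain Bs \<theta> where Bs: "list_all2 (infer ar \<Lambda> \<Gamma>) es (map BTy Bs)"
      "(\<Union>B\<in>set Bs. tvars_b B) \<inter> F = {}" "wf_subst ar \<theta>" "args_of T\<^sub>0 = map (subst_b \<theta>) Bs"
      using inferable_instances[OF _ \<open>finite F\<close>] by blast
    have "args_of (subst_t \<sigma> T) = map (subst_b \<theta>) Bs"
      using Bs(4) decl_app.hyps(4) by simp
    then obtain B \<theta>' where B: "transformer ar T (map BTy Bs) (BTy B)" "tvars_b B \<inter> F = {}"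
      "wf_subst ar \<theta>'" "res_of (subst_t \<sigma> T) = subst_b \<theta>' B"
      by (rule transformer_complete[OF inf decl_app.hyps(2) Bs(3) _ \<open>finite F\<close> Bs(2)])
    have "infer ar \<Lambda> \<Gamma> (App c es) (BTy B)"
      by (rule infer_app[OF decl_app.hyps(1) Bs(1) B(1)])
    then show "\<exists>B \<theta>. infer ar \<Lambda> \<Gamma> (App c es) (BTy B) \<and> tvars_b B \<inter> F = {} \<and> wf_subst ar \<theta>
        \<and> res_of T\<^sub>0 = subst_b \<theta> B"
      using B(2-4) decl_app.hyps(4) by auto
  qed
qed

lemma decl_n_imp_check:
  assumes inf: "infinite (UNIV :: 'v set)"
  shows "decl_n ar \<Lambda> \<Gamma> E t \<Longrightarrow> ground_env (\<Gamma> :: ('x, 'c, 'v) env) \<Longrightarrow> ground_t t \<Longrightarrow> check ar \<Lambda> \<Gamma> E t"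
proof (induction rule: decl_n.induct)
  case (decl_atm \<Gamma> e b)
  then obtain B \<theta> where B: "infer ar \<Lambda> \<Gamma> e (BTy B)" "wf_subst ar \<theta>" "b = subst_b \<theta> B"
    using decl_a_inferable_instance[OF inf] unfolding inferable_instance_def by blast
  then have "inst_le ar (BTy b) (BTy B)"
    by (auto simp: inst_le_def)
  moreover have "ground_b b"
    using decl_atm.prems(2) by (simp add: ground_t_def ground_b_def)
  ultimately show ?case
    using B(1) by (blast intro: check_atm)
next
  case (decl_fun b \<Gamma> x E t)
  then have "ground_env (\<Gamma>(x \<mapsto> b))" and "ground_t t"
    by (simp_all add: ground_env_upd ground_t_def)
  then have "check ar \<Lambda> (\<Gamma>(x \<mapsto> b)) E t"
    using decl_fun.IH by (simp add: fun_upd_def)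
  then show ?case
    by (rule check_fun[OF decl_fun.hyps(1)])
qed

section \<open>Soundness of checking\<close>

definition typable_instances :: "('c \<Rightarrow> nat) \<Rightarrow> ('n, 'c, 'v) library \<Rightarrow> ('x, 'c, 'v) env
    \<Rightarrow> ('n, 'x) aterm \<Rightarrow> ('c, 'v) btype botext \<Rightarrow> bool" where
  "typable_instances ar \<Lambda> \<Gamma> e R \<longleftrightarrow>
     (\<forall>\<sigma> b. wf_subst ar \<sigma> \<longrightarrow> ground_b b \<longrightarrow> subst_bot \<sigma> R = BTy b \<longrightarrow> decl_a ar \<Lambda> \<Gamma> e b)"

lemma transformer_BTy_elim:
  assumes "transformer ar T Rs (BTy B)"
  obtains \<rho> \<sigma> where "length Rs = length (args_of (subst_t (TVar \<circ> \<rho>) T))"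
    and "unifier ar \<sigma> (zip Rs (map BTy (args_of (subst_t (TVar \<circ> \<rho>) T))))"
    and "B = subst_b \<sigma> (res_of (subst_t (TVar \<circ> \<rho>) T))"
proof -
  obtain \<rho> where len: "length Rs = length (args_of (subst_t (TVar \<circ> \<rho>) T))"
    and "if \<exists>\<sigma>. unifier ar \<sigma> (zip Rs (map BTy (args_of (subst_t (TVar \<circ> \<rho>) T))))
      then \<exists>\<sigma>. is_mgu ar \<sigma> (zip Rs (map BTy (args_of (subst_t (TVar \<circ> \<rho>) T))))
        \<and> BTy B = BTy (subst_b \<sigma> (res_of (subst_t (TVar \<circ> \<rho>) T)))
      else BTy B = BBot"
    using assms unfolding transformer_def Let_def by blast
  then obtain \<sigma> where "is_mgu ar \<sigma> (zip Rs (map BTy (args_of (subst_t (TVar \<circ> \<rho>) T))))"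
    and "B = subst_b \<sigma> (res_of (subst_t (TVar \<circ> \<rho>) T))"
    by (auto split: if_splits)
  then show thesis
    using that[OF len] unfolding is_mgu_def by blast
qed

lemma unifier_zip_BTy_nth:
  assumes "unifier ar \<sigma> (zip Rs (map BTy As))" and "length Rs = length As" and "i < length As"
  shows "subst_bot \<sigma> (Rs ! i) = BTy (subst_b \<sigma> (As ! i))"
proof -
  have "(Rs ! i, BTy (As ! i)) \<in> set (zip Rs (map BTy As))"
    using assms(2,3) by (auto simp: set_zip)
  then show ?thesis
    using assms(1) by (auto simp: unifier_def)
qed

lemma typable_instances_args:
  assumes "list_all2 (typable_instances ar \<Lambda> \<Gamma>) es Rs" and len: "length Rs = length As"
    and unif: "unifier ar \<sigma> (zip Rs (map BTy As))"
    and \<Phi>: "wf_subst ar \<Phi>" "\<And>w. ground_b (\<Phi> w)"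
    and \<Phi>_\<sigma>: "\<And>X. subst_b \<Phi> X = subst_b \<Psi> (subst_b \<sigma> X)"
  shows "list_all2 (\<lambda>e A. decl_a ar \<Lambda> \<Gamma> e (subst_b \<Phi> A)) es As"
proof (rule list_all2_all_nthI)
  show "length es = length As"
    using assms(1) len by (simp add: list_all2_conv_all_nth)
  fix i
  assume "i < length es"
  then have i: "i < length As"
    using \<open>length es = length As\<close> by simp
  have "subst_bot \<sigma> (Rs ! i) = BTy (subst_b \<sigma> (As ! i))"
    using unifier_zip_BTy_nth[OF unif len i] .
  then have "subst_bot \<Phi> (Rs ! i) = BTy (subst_b \<Phi> (As ! i))"
    by (cases "Rs ! i") (simp_all add: \<Phi>_\<sigma>)
  moreover have "typable_instances ar \<Lambda> \<Gamma> (es ! i) (Rs ! i)"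
    using assms(1) \<open>i < length es\<close> by (simp add: list_all2_conv_all_nth)
  ultimately show "decl_a ar \<Lambda> \<Gamma> (es ! i) (subst_b \<Phi> (As ! i))"
    using \<Phi> ground_b_subst_b unfolding typable_instances_def by blast
qed

lemma decl_app_ground_instance:
  assumes "\<Lambda> c = Some T" and "wf_subst ar \<Phi>" and "\<And>w. ground_b (\<Phi> w)"
    and "list_all2 (\<lambda>e A. decl_a ar \<Lambda> \<Gamma> e (subst_b \<Phi> A)) es (args_of (subst_t (TVar \<circ> \<rho>) T))"
  shows "decl_a ar \<Lambda> \<Gamma> (App c es) (subst_b \<Phi> (res_of (subst_t (TVar \<circ> \<rho>) T)))"
proof -
  define \<tau> where "\<tau> = (\<lambda>u. \<Phi> (\<rho> u))"
  have \<tau>: "subst_t \<Phi> (subst_t (TVar \<circ> \<rho>) T) = subst_t \<tau> T"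
    by (simp add: \<tau>_def subst_t_subst_t)
  have "wf_subst ar \<tau>" and "ground_t (subst_t \<tau> T)"
    using assms(2,3) by (simp_all add: \<tau>_def wf_subst_def ground_t_subst_t)
  moreover have "list_all2 (decl_a ar \<Lambda> \<Gamma>) es (args_of (subst_t \<tau> T))"
    using assms(4) unfolding \<tau>[symmetric] by (simp add: list_all2_map2)
  ultimately have "decl_a ar \<Lambda> \<Gamma> (App c es) (res_of (subst_t \<tau> T))"
    by (rule decl_app[where \<Lambda> = \<Lambda>, OF assms(1) _ _ refl])
  then show ?thesis
    using \<tau> by (metis res_of_subst_t)
qed

lemma infer_typable_instances:
  assumes wf\<Lambda>: "\<forall>c T. \<Lambda> c = Some T \<longrightarrow> wf_t ar T"
  shows "infer ar \<Lambda> \<Gamma> e R \<Longrightarrow> ground_env \<Gamma> \<Longrightarrow> typable_instances ar \<Lambda> \<Gamma> e R"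
proof (induction rule: infer.induct)
  case (infer_var \<Gamma> x b)
  then have "ground_b b"
    by (simp add: ground_env_def)
  then show ?case
    using infer_var(1) by (auto simp: typable_instances_def subst_b_ground intro: decl_var)
next
  case (infer_app c T \<Gamma> es Rs R)
  show ?case
    unfolding typable_instances_def
  proof (intro allI impI)
    fix \<sigma> b
    assume \<sigma>: "wf_subst ar \<sigma>" and b: "ground_b b" and R: "subst_bot \<sigma> R = BTy b"
    then obtain B where "R = BTy B"
      by (cases R) auto
    then obtain \<rho> \<sigma>' where len: "length Rs = length (args_of (subst_t (TVar \<circ> \<rho>) T))"
      and unif: "unifier ar \<sigma>' (zip Rs (map BTy (args_of (subst_t (TVar \<circ> \<rho>) T))))"
      and B: "B = subst_b \<sigma>' (res_of (subst_t (TVar \<circ> \<rho>) T))"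
      using transformer_BTy_elim infer_app.hyps(2) by metis
    define T' where "T' = subst_t (TVar \<circ> \<rho>) T"
    have "wf_t ar T'"
      unfolding T'_def using wf\<Lambda> infer_app.hyps(1) by (intro wf_t_subst_t) (auto simp: wf_subst_def)
    moreover have "wf_subst ar \<sigma>'"
      using unif by (simp add: unifier_def)
    moreover have b_eq: "b = subst_b \<sigma> (subst_b \<sigma>' (res_of T'))"
      using R B \<open>R = BTy B\<close> by (simp add: T'_def)
    ultimately have "wf_b ar b"
      using \<sigma> by (simp add: wf_b_subst_b wf_b_res_of)
    define \<Phi> where "\<Phi> = ground_completion b (\<lambda>w. subst_b \<sigma> (\<sigma>' w))"
      \<comment> \<open>the variables left free by \<sigma> \<circ> \<sigma>' are sent to the well-formed ground type b\<close>
    have "wf_subst ar (\<lambda>w. subst_b \<sigma> (\<sigma>' w))"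
      using \<open>wf_subst ar \<sigma>'\<close> \<sigma> by (simp add: wf_subst_def wf_b_subst_b)
    then have \<Phi>: "wf_subst ar \<Phi>" "\<And>w. ground_b (\<Phi> w)"
      unfolding \<Phi>_def using \<open>wf_b ar b\<close> b
      by (simp_all add: wf_subst_ground_completion ground_completion_ground)
    have \<Phi>_eq: "subst_b \<Phi> X = subst_b (ground_completion b \<sigma>) (subst_b \<sigma>' X)" for X
      by (simp add: \<Phi>_def subst_b_ground_completion subst_b_subst_b)
    have res: "subst_b \<Phi> (res_of T') = b"
      using b b_eq by (simp add: \<Phi>_eq subst_b_ground_completion subst_b_ground)
    have "list_all2 (typable_instances ar \<Lambda> \<Gamma>) es Rs"
      using infer_app.IH infer_app.prems by (simp add: list_all2_conv_all_nth)
    then have "list_all2 (\<lambda>e A. decl_a ar \<Lambda> \<Gamma> e (subst_b \<Phi> A)) es (args_of T')"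
      using len unif \<Phi> \<Phi>_eq unfolding T'_def by (rule typable_instances_args)
    then have "decl_a ar \<Lambda> \<Gamma> (App c es) (subst_b \<Phi> (res_of T'))"
      unfolding T'_def by (rule decl_app_ground_instance[where \<Lambda> = \<Lambda>, OF infer_app.hyps(1) \<Phi>])
    then show "decl_a ar \<Lambda> \<Gamma> (App c es) b"
      using res by simp
  qed
qed

lemma check_imp_decl_n:
  assumes "\<forall>c T. \<Lambda> c = Some T \<longrightarrow> wf_t ar T"
  shows "check ar \<Lambda> \<Gamma> E t \<Longrightarrow> ground_env \<Gamma> \<Longrightarrow> decl_n ar \<Lambda> \<Gamma> E t"
proof (induction rule: check.induct)
  case (check_fun b \<Gamma> x E t)
  then have "ground_env (\<Gamma>(x \<mapsto> b))"
    by (simp add: ground_env_upd)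
  then have "decl_n ar \<Lambda> (\<Gamma>(x \<mapsto> b)) E t"
    using check_fun.IH by (simp add: fun_upd_def)
  then show ?case
    by (rule decl_fun[OF check_fun.hyps(1)])
next
  case (check_atm b \<Gamma> e B)
  then obtain \<sigma> where "wf_subst ar \<sigma>" "subst_bot \<sigma> B = BTy b"
    by (auto simp: inst_le_def)
  then have "decl_a ar \<Lambda> \<Gamma> e b"
    using infer_typable_instances[OF assms check_atm.hyps(2) check_atm.prems] check_atm.hyps(1)
    unfolding typable_instances_def by blast
  then show ?case
    by (rule decl_atm)
qed

theorem mainTheorem5:
  fixes ar :: "'c \<Rightarrow> nat"
    and \<Lambda> :: "('n, 'c, 'v) library"
    and E :: "('n, 'x) nterm"
    and t :: "('c, 'v) ty"
  assumes "infinite (UNIV :: 'v set)"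
    and "finite (dom \<Lambda>)"
    and "\<forall>c T. \<Lambda> c = Some T \<longrightarrow> wf_t ar T"
    and "wf_t ar t" and "ground_t t"
  shows "decl_n ar \<Lambda> Map.empty E t \<longleftrightarrow> check ar \<Lambda> Map.empty E t"
proof
  show "check ar \<Lambda> Map.empty E t" if "decl_n ar \<Lambda> Map.empty E t"
    by (rule decl_n_imp_check[OF assms(1) that ground_env_empty assms(5)])
  show "decl_n ar \<Lambda> Map.empty E t" if "check ar \<Lambda> Map.empty E t"
    by (rule check_imp_decl_n[OF assms(3) that ground_env_empty])
qed

end
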